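(* Run Algorithm 1 on an instance of Problem (P); suppose it performs $k$ iterations and the indices chosen as $i^*$ are $i_1,i_2,\dots,i_k$ in order, and let $x_1,\dots,x_n$ be the values of the variables after the last iteration. Then there exists an optimal solution $(x_1^*,\dots,x_n^* )$ of Problem (P) such that $x_{i_j}^*=x_{i_j}$ for all $j=1,\dots,k$.
   Context: Problem (P): given an integer $n\ge1$, reals $0<q_1\le\cdots\le q_n$, $z_1,\dots,z_n>0$ and $K>0$, maximize $\sum_{i=1}^n x_i$ subject to $0\le x_i\le q_i$ for all $i$, $0\le x_1\le x_2\le\cdots\le x_n$, and $\sum_{i=1}^n z_ix_i\le K$. For $1\le i<j\le n+1$ let $\mathrm{sum}(i,j)=z_i+\cdots+z_{j-1}$ and $\mathrm{avg}(i,j)=\mathrm{sum}(i,j)/(j-i)$. Algorithm 1: Initialize $S=\{0,n+1\}$, $y_i=\mathrm{avg}(i,n+1)$ and $x_i=0$ for $i=1,\dots,n$, and $\hat B=K$. While $\hat B>0$ and $S\ne\{0,1,\dots,n+1\}$, perform an iteration: let $i^*$ be the index $i\in\{1,\dots,n\}\setminus S$ minimizing $y_i$, ties broken in favour of the smallest index; let $i_L=\max\{j\in S:j<i^*\}$ and $i_R=\min\{j\in S:j>i^*\}$; set $d=\min\{\hat B/((i_R-i^* )y_{i^*}),\ q_{i^*}-x_{i^*}\}$; set $\hat B\leftarrow\hat B-d(i_R-i^* )y_{i^*}$; set $x_i\leftarrow x_i+d$ for all $i^*\le i<i_R$; set $y_i\leftarrow\mathrm{avg}(i,i^* )$ for all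 $i_L<i<i^*$; add $i^*$ to $S$. When the loop ends, output $x_1,\dots,x_n$. *)

theory Defs
  imports Complex_Main
begin

text \<open>Problem (P): indices 1..n; vectors are functions nat => real, only values on 1..n matter.\<close>

definition feasibleP :: "nat \<Rightarrow> (nat \<Rightarrow> real) \<Rightarrow> (nat \<Rightarrow> real) \<Rightarrow> real \<Rightarrow> (nat \<Rightarrow> real) \<Rightarrow> bool" where
  "feasibleP n q z K x \<longleftrightarrow>
     (\<forall>i\<in>{1..n}. 0 \<le> x i \<and> x i \<le> q i) \<and>
     (\<forall>i\<in>{1..n}. \<forall>j\<in>{1..n}. i \<le> j \<longrightarrow> x i \<le> x j) \<and>
     (\<Sum>i=1..n. z i * x i) \<le> K"

definition optimalP :: "nat \<Rightarrow> (nat \<Rightarrow> real) \<Rightarrow> (nat \<Rightarrow> real) \<Rightarrow> real \<Rightarrow> (nat \<Rightarrow> real) \<Rightarrow> bool" where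
  "optimalP n q z K x \<longleftrightarrow> feasibleP n q z K x \<and>
     (\<forall>x'. feasibleP n q z K x' \<longrightarrow> (\<Sum>i=1..n. x' i) \<le> (\<Sum>i=1..n. x i))"

definition sumz :: "(nat \<Rightarrow> real) \<Rightarrow> nat \<Rightarrow> nat \<Rightarrow> real" where
  "sumz z i j = (\<Sum>l\<in>{i..<j}. z l)"

definition avgz :: "(nat \<Rightarrow> real) \<Rightarrow> nat \<Rightarrow> nat \<Rightarrow> real" where
  "avgz z i j = sumz z i j / real (j - i)"

record alg_state =
  stS :: "nat set"
  stY :: "nat \<Rightarrow> real"
  stX :: "nat \<Rightarrow> real"
  stB :: real

definition alg_init :: "nat \<Rightarrow> (nat \<Rightarrow> real) \<Rightarrow> real \<Rightarrow> alg_state" where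
  "alg_init n z K = \<lparr> stS = {0, n+1}, stY = (\<lambda>i. avgz z i (n+1)), stX = (\<lambda>i. 0), stB = K \<rparr>"

definition alg_running :: "nat \<Rightarrow> alg_state \<Rightarrow> bool" where
  "alg_running n st \<longleftrightarrow> stB st > 0 \<and> stS st \<noteq> {0..n+1}"

definition alg_istar :: "nat \<Rightarrow> alg_state \<Rightarrow> nat" where
  "alg_istar n st = (LEAST i. i \<in> {1..n} - stS st \<and> (\<forall>j \<in> {1..n} - stS st. stY st i \<le> stY st j))"

definition alg_step :: "nat \<Rightarrow> (nat \<Rightarrow> real) \<Rightarrow> (nat \<Rightarrow> real) \<Rightarrow> alg_state \<Rightarrow> alg_state" where
  "alg_step n q z st =
    (let is = alg_istar n st;
         iL = Max {j \<in> stS st. j < is};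
         iR = Min {j \<in> stS st. j > is};
         d = min (stB st / (real (iR - is) * stY st is)) (q is - stX st is)
     in \<lparr> stS = insert is (stS st),
          stY = (\<lambda>i. if iL < i \<and> i < is then avgz z i is else stY st i),
          stX = (\<lambda>i. if is \<le> i \<and> i < iR then stX st i + d else stX st i),
          stB = stB st - d * real (iR - is) * stY st is \<rparr>)"

definition alg_iter :: "nat \<Rightarrow> (nat \<Rightarrow> real) \<Rightarrow> (nat \<Rightarrow> real) \<Rightarrow> real \<Rightarrow> nat \<Rightarrow> alg_state" where
  "alg_iter n q z K m = (alg_step n q z ^^ m) (alg_init n z K)"

definition alg_num_iter :: "nat \<Rightarrow> (nat \<Rightarrow> real) \<Rightarrow> (nat \<Rightarrow> real) \<Rightarrow> real \<Rightarrow> nat" where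
  "alg_num_iter n q z K = (LEAST m. \<not> alg_running n (alg_iter n q z K m))"

definition alg_chosen :: "nat \<Rightarrow> (nat \<Rightarrow> real) \<Rightarrow> (nat \<Rightarrow> real) \<Rightarrow> real \<Rightarrow> nat \<Rightarrow> nat" where
  "alg_chosen n q z K j = alg_istar n (alg_iter n q z K (j - 1))"

definition alg_output :: "nat \<Rightarrow> (nat \<Rightarrow> real) \<Rightarrow> (nat \<Rightarrow> real) \<Rightarrow> real \<Rightarrow> nat \<Rightarrow> real" where
  "alg_output n q z K = stX (alg_iter n q z K (alg_num_iter n q z K))"

end

theory Submission
  imports Defs
begin

text \<open>
  The output of Algorithm 1 is itself optimal, so it can serve as \<open>x\<^sup>*\<close>.

  The chosen indices \<open>S\<close> cut \<open>{1..n}\<close> into blocks \<open>[s, next_in S s)\<close> on which \<open>x\<close> is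
  constant. The algorithm maintains a level \<open>L\<close>, the value \<open>y(i\<^sup>*)\<close> of the last chosen index
  (\<open>0\<close> initially): every unchosen \<open>a\<close> has \<open>avg(a, next a) \<ge> L\<close>, and every block starting at a
  chosen \<open>s\<close> has average \<open>\<le> L\<close> and is either saturated (\<open>x\<^sub>s = q\<^sub>s\<close>) or has average exactly
  \<open>L\<close> with the budget used up. Choosing \<open>i\<^sup>*\<close> only shortens the blocks starting at \<open>i\<^sub>L\<close> and at
  unchosen indices between \<open>i\<^sub>L\<close> and \<open>i\<^sup>*\<close>, and the mediant inequalities for averages keep
  these bounds.

  If the loop stops with budget left, then \<open>x = q\<close>. Otherwise the budget is exhausted, and
  \<open>\<Sum> x\<^sub>i = \<Sum> (1 - z\<^sub>i/L) x\<^sub>i + (\<Sum> z\<^sub>i x\<^sub>i)/L\<close>: summing the first term by parts along the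
  blocks shows that no feasible \<open>x'\<close> makes it larger than \<open>x\<close> does, and the second term is at
  most \<open>K/L\<close>, with equality for \<open>x\<close>.
\<close>

definition next_in :: "nat set \<Rightarrow> nat \<Rightarrow> nat" where
  "next_in S a = Min {j \<in> S. a < j}"

lemma next_in_mem_gt_le:
  assumes "finite S" "j \<in> S" "a < j"
  shows "next_in S a \<in> S" "a < next_in S a" "next_in S a \<le> j"
proof -
  have fin: "finite {j \<in> S. a < j}" and j: "j \<in> {j \<in> S. a < j}" using assms by auto
  then have "next_in S a \<in> {j \<in> S. a < j}" unfolding next_in_def by (intro Min_in) auto
  then show "next_in S a \<in> S" "a < next_in S a" by auto
  show "next_in S a \<le> j" unfolding next_in_def using fin j by (rule Min_le)
qed

lemma next_in_eqI:
  assumes "finite S" "m \<in> S" "a < m" "\<And>k. k \<in> S \<Longrightarrow> a < k \<Longrightarrow> m \<le> k"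
  shows "next_in S a = m"
  using next_in_mem_gt_le[OF assms(1-3)] assms(4) by (meson le_antisym)

lemma next_in_Suc:
  assumes "finite S" "j \<in> S" "Suc a < j"
  shows "next_in S a = (if Suc a \<in> S then Suc a else next_in S (Suc a))"
proof (cases "Suc a \<in> S")
  case True
  then show ?thesis using assms(1) by (auto intro: next_in_eqI)
next
  case False
  note next_Suc = next_in_mem_gt_le[OF assms]
  have "next_in S (Suc a) \<le> k" if "k \<in> S" "a < k" for k
    using that False next_in_mem_gt_le[OF assms(1) that(1)] by (metis Suc_lessI)
  then show ?thesis using False next_Suc assms(1) by (auto intro: next_in_eqI)
qed

lemma sumz_eq_avgz: "a < b \<Longrightarrow> sumz z a b = real (b - a) * avgz z a b"
  unfolding avgz_def by simp

lemma avgz_pos: "a < b \<Longrightarrow> (\<And>i. a \<le> i \<Longrightarrow> i < b \<Longrightarrow> 0 < z i) \<Longrightarrow> 0 < avgz z a b"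
  unfolding avgz_def sumz_def by (intro divide_pos_pos sum_pos) auto

lemma avgz_split:
  assumes "a < b" "b < c"
  shows "real (b - a) * avgz z a b
           = real (b - a) * avgz z a c + real (c - b) * (avgz z a c - avgz z b c)"
proof -
  have "sumz z a c = sumz z a b + sumz z b c"
    unfolding sumz_def using assms by (simp add: sum.atLeastLessThan_concat)
  then show ?thesis
    using assms by (simp add: sumz_eq_avgz of_nat_diff algebra_simps)
qed

lemma avgz_prefix_le:
  assumes "a < b" "b < c" "avgz z a c \<le> avgz z b c"
  shows "avgz z a b \<le> avgz z a c"
proof -
  have "real (c - b) * (avgz z a c - avgz z b c) \<le> 0"
    using assms by (simp add: mult_nonneg_nonpos)
  then have "real (b - a) * avgz z a b \<le> real (b - a) * avgz z a c"
    using avgz_split[OF assms(1,2), of z] by linarith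
  then show ?thesis using assms(1) by simp
qed

lemma avgz_prefix_ge:
  assumes "a < b" "b < c" "avgz z b c \<le> avgz z a c"
  shows "avgz z a c \<le> avgz z a b"
proof -
  have "0 \<le> real (c - b) * (avgz z a c - avgz z b c)"
    using assms by simp
  then have "real (b - a) * avgz z a c \<le> real (b - a) * avgz z a b"
    using avgz_split[OF assms(1,2), of z] by linarith
  then show ?thesis using assms(1) by simp
qed

definition jump :: "nat set \<Rightarrow> (nat \<Rightarrow> real) \<Rightarrow> nat \<Rightarrow> real" where
  "jump S v a = (if a \<in> S then v a else v a - v (a - 1))"

lemma sum_mult_eq_block_sums_from:
  fixes w v :: "nat \<Rightarrow> real"
  assumes S: "finite S" "Suc n \<in> S" and "b \<le> n"
  shows "(\<Sum>i=b..n. w i * v i) = v b * (\<Sum>i=b..<next_in S b. w i)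
           + (\<Sum>a=Suc b..n. jump S v a * (\<Sum>i=a..<next_in S a. w i))"
  using \<open>b \<le> n\<close>
proof (induction b rule: inc_induct)
  case base
  have "next_in S n = Suc n" using S by (intro next_in_eqI) auto
  then show ?case by simp
next
  case (step b)
  let ?G = "\<lambda>a. \<Sum>i=a..<next_in S a. w i"
  have sum_b: "(\<Sum>i=b..n. w i * v i) = w b * v b + (\<Sum>i=Suc b..n. w i * v i)"
    and rest: "(\<Sum>a=Suc b..n. jump S v a * ?G a)
      = jump S v (Suc b) * ?G (Suc b) + (\<Sum>a=Suc (Suc b)..n. jump S v a * ?G a)"
    using step.hyps by (simp_all add: sum.atLeast_Suc_atMost)
  have next_b: "next_in S b = (if Suc b \<in> S then Suc b else next_in S (Suc b))"
    using step.hyps S by (intro next_in_Suc) auto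
  show ?case
  proof (cases "Suc b \<in> S")
    case True
    then show ?thesis using sum_b rest next_b step.IH by (simp add: jump_def)
  next
    case False
    have "Suc b < next_in S (Suc b)" using step.hyps S by (intro next_in_mem_gt_le) auto
    then have "?G b = w b + ?G (Suc b)" using False next_b by (simp add: sum.atLeast_Suc_lessThan)
    then show ?thesis using False sum_b rest step.IH by (simp add: jump_def algebra_simps)
  qed
qed

lemma sum_mult_eq_block_sums:
  fixes w v :: "nat \<Rightarrow> real"
  assumes "finite S" "Suc n \<in> S" "v 0 = 0"
  shows "(\<Sum>i=1..n. w i * v i) = (\<Sum>a=1..n. jump S v a * (\<Sum>i=a..<next_in S a. w i))"
proof (cases "n = 0")
  case False
  then show ?thesis
    using sum_mult_eq_block_sums_from[OF assms(1,2), of 1 w v] assms(3)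
    by (simp add: sum.atLeast_Suc_atMost jump_def)
qed simp

lemma sum_eq_block_lagrangian:
  fixes v :: "nat \<Rightarrow> real" and L :: real
  assumes "finite S" "Suc n \<in> S" "v 0 = 0" "L \<noteq> 0"
  shows "(\<Sum>i=1..n. v i)
           = (\<Sum>a=1..n. jump S v a * (\<Sum>i=a..<next_in S a. 1 - z i / L)) + (\<Sum>i=1..n. z i * v i) / L"
proof -
  have "(\<Sum>i=1..n. v i) = (\<Sum>i=1..n. (1 - z i / L) * v i) + (\<Sum>i=1..n. z i * v i) / L"
    using assms(4) by (simp add: sum_divide_distrib algebra_simps flip: sum.distrib)
  then show ?thesis using sum_mult_eq_block_sums[where v = v, OF assms(1-3)] by simp
qed

lemma sum_one_minus_div_eq_avgz:
  assumes "a < b"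
  shows "(\<Sum>i=a..<b. 1 - z i / L) = real (b - a) * (1 - avgz z a b / L)"
proof -
  have "(\<Sum>i=a..<b. 1 - z i / L) = real (b - a) - sumz z a b / L"
    unfolding sumz_def by (simp add: sum_subtractf sum_divide_distrib)
  then show ?thesis using sumz_eq_avgz[OF assms, of z] by (simp add: algebra_simps)
qed

lemma feasible_sum_le_certificate:
  fixes x x' :: "nat \<Rightarrow> real"
  assumes S: "finite S" "Suc n \<in> S" and "0 < L"
    and chosen: "\<And>s. s \<in> {1..n} \<inter> S \<Longrightarrow>
                   avgz z s (next_in S s) \<le> L \<and> (x s = q s \<or> avgz z s (next_in S s) = L)"
    and free: "\<And>a. a \<in> {1..n} - S \<Longrightarrow> L \<le> avgz z a (next_in S a) \<and> x a = x (a - 1)"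
    and "x 0 = 0" and budget: "(\<Sum>i=1..n. z i * x i) = K"
    and x': "feasibleP n q z K x'"
  shows "(\<Sum>i=1..n. x' i) \<le> (\<Sum>i=1..n. x i)"
proof -
  define G where "G a = (\<Sum>i=a..<next_in S a. 1 - z i / L)" for a
  \<comment> \<open>\<open>feasibleP\<close> does not constrain \<open>x' 0\<close>\<close>
  define x0 where "x0 = x'(0 := 0)"
  have x'_bounds: "\<And>i. i \<in> {1..n} \<Longrightarrow> 0 \<le> x' i \<and> x' i \<le> q i"
    and x'_mono: "\<And>i j. i \<in> {1..n} \<Longrightarrow> j \<in> {1..n} \<Longrightarrow> i \<le> j \<Longrightarrow> x' i \<le> x' j"
    and x'_budget: "(\<Sum>i=1..n. z i * x' i) \<le> K"
    using x' unfolding feasibleP_def by auto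
  have G_eq: "G a = real (next_in S a - a) * (1 - avgz z a (next_in S a) / L)" if "a \<in> {1..n}" for a
    unfolding G_def using that next_in_mem_gt_le(2)[OF S, of a] by (intro sum_one_minus_div_eq_avgz) auto
  have termwise: "jump S x0 a * G a \<le> jump S x a * G a" if a: "a \<in> {1..n}" for a
  proof (cases "a \<in> S")
    case True
    with a chosen[of a] have G: "0 \<le> G a" and xG: "x a * G a = q a * G a"
      using G_eq[OF a] \<open>0 < L\<close> by auto
    have "x' a * G a \<le> q a * G a" using x'_bounds[OF a] G by (intro mult_right_mono) auto
    then show ?thesis using True a xG by (auto simp: jump_def x0_def)
  next
    case False
    with a free[of a] have "G a \<le> 0" "jump S x a = 0"
      using G_eq[OF a] \<open>0 < L\<close> by (auto simp: jump_def mult_nonneg_nonpos)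
    moreover have "0 \<le> jump S x0 a"
    proof (cases "a = 1")
      case False
      then have "a - 1 \<in> {1..n}" using a by auto
      then show ?thesis using False \<open>a \<notin> S\<close> a x'_mono[of "a - 1" a] by (simp add: jump_def x0_def)
    qed (use \<open>a \<notin> S\<close> x'_bounds[of 1] a in \<open>simp add: jump_def x0_def\<close>)
    ultimately show ?thesis by (simp add: mult_nonneg_nonpos)
  qed
  have "(\<Sum>i=1..n. x' i) = (\<Sum>i=1..n. x0 i)" by (simp add: x0_def)
  also have "\<dots> = (\<Sum>a=1..n. jump S x0 a * G a) + (\<Sum>i=1..n. z i * x' i) / L"
    using sum_eq_block_lagrangian[OF S, of x0 L z] \<open>0 < L\<close> by (simp add: G_def x0_def)
  also have "\<dots> \<le> (\<Sum>a=1..n. jump S x a * G a) + K / L"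
    using termwise x'_budget \<open>0 < L\<close> by (intro add_mono sum_mono divide_right_mono) auto
  also have "\<dots> = (\<Sum>i=1..n. x i)"
    using sum_eq_block_lagrangian[where v = x, OF S \<open>x 0 = 0\<close>, of L z] \<open>0 < L\<close> budget
    by (simp add: G_def)
  finally show ?thesis .
qed

lemma min_step_bounds:
  fixes B c x r :: real
  assumes "0 < B" "0 < c" "x \<le> r"
  shows "0 \<le> min (B / c) (r - x)" "min (B / c) (r - x) * c \<le> B" "x + min (B / c) (r - x) \<le> r"
    and "x + min (B / c) (r - x) = r \<or> min (B / c) (r - x) * c = B"
  using assms by (auto simp: min_def field_simps)

lemma alg_istar_min:
  assumes "{1..n} - stS st \<noteq> {}"
  shows "alg_istar n st \<in> {1..n} - stS st"
    and "\<And>j. j \<in> {1..n} - stS st \<Longrightarrow> stY st (alg_istar n st) \<le> stY st j"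
proof -
  let ?U = "{1..n} - stS st"
  have "Min (stY st ` ?U) \<in> stY st ` ?U" using assms by (intro Min_in) auto
  then obtain i where "i \<in> ?U" "stY st i = Min (stY st ` ?U)" by auto
  then have "i \<in> ?U \<and> (\<forall>j\<in>?U. stY st i \<le> stY st j)" by simp
  then have "alg_istar n st \<in> ?U \<and> (\<forall>j\<in>?U. stY st (alg_istar n st) \<le> stY st j)"
    unfolding alg_istar_def by (rule LeastI)
  then show "alg_istar n st \<in> ?U" "\<And>j. j \<in> ?U \<Longrightarrow> stY st (alg_istar n st) \<le> stY st j"
    by auto
qed

lemma alg_iter_Suc: "alg_iter n q z K (Suc m) = alg_step n q z (alg_iter n q z K m)"
  unfolding alg_iter_def by simp

locale problem_P =
  fixes n :: nat and q z :: "nat \<Rightarrow> real" and K :: real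
  assumes q_mono: "\<And>i j. i \<in> {1..n} \<Longrightarrow> j \<in> {1..n} \<Longrightarrow> i \<le> j \<Longrightarrow> q i \<le> q j"
    and q_nonneg: "\<And>i. i \<in> {1..n} \<Longrightarrow> 0 \<le> q i"
    and z_pos: "\<And>i. i \<in> {1..n} \<Longrightarrow> 0 < z i"
    and K_pos: "0 < K"
begin

definition breakpoints_invariant :: "nat set \<Rightarrow> bool" where
  "breakpoints_invariant S \<longleftrightarrow> 0 \<in> S \<and> Suc n \<in> S \<and> S \<subseteq> {0..Suc n}"

definition level_invariant :: "alg_state \<Rightarrow> real \<Rightarrow> bool" where
  "level_invariant st L \<longleftrightarrow>
     (\<forall>a \<in> {1..n} - stS st. stY st a = avgz z a (next_in (stS st) a) \<and> L \<le> stY st a) \<and>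
     (\<forall>s \<in> {1..n} \<inter> stS st. avgz z s (next_in (stS st) s) \<le> L \<and>
        (stX st s = q s \<or> stB st = 0 \<and> avgz z s (next_in (stS st) s) = L)) \<and>
     0 \<le> L \<and> (stB st = 0 \<longrightarrow> 0 < L)"

definition profile_invariant :: "alg_state \<Rightarrow> bool" where
  "profile_invariant st \<longleftrightarrow>
     stX st 0 = 0 \<and> (\<forall>a \<in> {1..n} - stS st. stX st a = stX st (a - 1)) \<and>
     (\<forall>i \<in> {1..n}. 0 \<le> stX st i \<and> stX st i \<le> q i) \<and>
     (\<forall>i. 1 \<le> i \<longrightarrow> i < n \<longrightarrow> stX st i \<le> stX st (Suc i))"

definition budget_invariant :: "alg_state \<Rightarrow> bool" where
  "budget_invariant st \<longleftrightarrow> stB st = K - (\<Sum>i=1..n. z i * stX st i) \<and> 0 \<le> stB st"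

definition invariant :: "alg_state \<Rightarrow> real \<Rightarrow> bool" where
  "invariant st L \<longleftrightarrow> breakpoints_invariant (stS st) \<and> level_invariant st L \<and>
     profile_invariant st \<and> budget_invariant st"

lemma level_invariantD:
  assumes "level_invariant st L"
  shows "\<And>a. a \<in> {1..n} - stS st \<Longrightarrow> stY st a = avgz z a (next_in (stS st) a)"
    and "\<And>a. a \<in> {1..n} - stS st \<Longrightarrow> L \<le> stY st a"
    and "\<And>s. s \<in> {1..n} \<inter> stS st \<Longrightarrow> avgz z s (next_in (stS st) s) \<le> L"
    and "\<And>s. s \<in> {1..n} \<inter> stS st \<Longrightarrow>
           stX st s = q s \<or> stB st = 0 \<and> avgz z s (next_in (stS st) s) = L"
    and "0 \<le> L" "stB st = 0 \<Longrightarrow> 0 < L"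
  using assms unfolding level_invariant_def by blast+

lemma profile_invariantD:
  assumes "profile_invariant st"
  shows "stX st 0 = 0" "\<And>a. a \<in> {1..n} - stS st \<Longrightarrow> stX st a = stX st (a - 1)"
    and "\<And>i. i \<in> {1..n} \<Longrightarrow> 0 \<le> stX st i" "\<And>i. i \<in> {1..n} \<Longrightarrow> stX st i \<le> q i"
    and "\<And>i. 1 \<le> i \<Longrightarrow> i < n \<Longrightarrow> stX st i \<le> stX st (Suc i)"
  using assms unfolding profile_invariant_def by blast+

lemma avgz_pos_in_range: "1 \<le> a \<Longrightarrow> a < b \<Longrightarrow> b \<le> Suc n \<Longrightarrow> 0 < avgz z a b"
  using z_pos by (intro avgz_pos) auto

lemma invariant_init: "invariant (alg_init n z K) 0"
proof -
  have "next_in {0, Suc n} a = Suc n" if "a \<in> {1..n}" for a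
    using that by (intro next_in_eqI) auto
  then show ?thesis
    unfolding invariant_def breakpoints_invariant_def level_invariant_def profile_invariant_def
      budget_invariant_def alg_init_def
    using avgz_pos_in_range q_nonneg K_pos by (auto intro: less_imp_le)
qed

lemma feasible_if_invariant:
  assumes "profile_invariant st" "budget_invariant st"
  shows "feasibleP n q z K (stX st)"
proof -
  have step: "stX st i \<le> stX st (Suc i)" if "i \<in> {1..<n}" for i
    using assms(1) that unfolding profile_invariant_def by auto
  have "stX st i \<le> stX st j" if "i \<in> {1..n}" "j \<in> {1..n}" "i \<le> j" for i j
    using that by (intro lift_Suc_mono_le_ivl[where N = "{1..<n}" and f = "stX st", OF step]) auto
  then show ?thesis using assms unfolding feasibleP_def profile_invariant_def budget_invariant_def
    by auto
qed

lemma optimal_if_stopped: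
  assumes "invariant st L" "\<not> alg_running n st"
  shows "optimalP n q z K (stX st)"
proof -
  have S: "finite (stS st)" "Suc n \<in> stS st" and level: "level_invariant st L"
    and profile: "profile_invariant st" and budget: "budget_invariant st"
    using assms(1) finite_subset unfolding invariant_def breakpoints_invariant_def by auto
  have "(\<Sum>i=1..n. x' i) \<le> (\<Sum>i=1..n. stX st i)" if x': "feasibleP n q z K x'" for x'
  proof (cases "stB st = 0")
    case True
    note level = level_invariantD[OF level] and profile = profile_invariantD[OF profile]
    have "0 < L" using level(6) True .
    moreover have "(\<Sum>i=1..n. z i * stX st i) = K" using budget True by (simp add: budget_invariant_def)
    ultimately show ?thesis
      using level(1-4) profile(1,2) True
      by (intro feasible_sum_le_certificate[OF S _ _ _ _ _ x']) auto
  next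
    case False
    then have "stS st = {0..Suc n}"
      using assms(2) budget unfolding alg_running_def budget_invariant_def by auto
    then have "stX st i = q i" if "i \<in> {1..n}" for i
      using level False that unfolding level_invariant_def by auto
    then show ?thesis using x' unfolding feasibleP_def by (intro sum_mono) auto
  qed
  then show ?thesis
    unfolding optimalP_def using feasible_if_invariant[OF profile budget] by blast
qed

end

locale running_state = problem_P +
  fixes st :: alg_state and L :: real
  assumes invariant: "invariant st L" and running: "alg_running n st"
begin

abbreviation S where "S \<equiv> stS st"
abbreviation Y where "Y \<equiv> stY st"
abbreviation X where "X \<equiv> stX st"
abbreviation B where "B \<equiv> stB st"
definition ist where "ist = alg_istar n st"
definition iL where "iL = Max {j \<in> S. j < ist}"
definition iR where "iR = Min {j \<in> S. j > ist}"
definition d where "d = min (B / (real (iR - ist) * Y ist)) (q ist - X ist)"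

lemma alg_step_simps:
  "stS (alg_step n q z st) = insert ist S"
  "stY (alg_step n q z st) = (\<lambda>i. if iL < i \<and> i < ist then avgz z i ist else Y i)"
  "stX (alg_step n q z st) = (\<lambda>i. if ist \<le> i \<and> i < iR then X i + d else X i)"
  "stB (alg_step n q z st) = B - d * real (iR - ist) * Y ist"
  unfolding alg_step_def Let_def ist_def[symmetric] iL_def[symmetric] iR_def[symmetric] d_def[symmetric]
  by simp_all

lemma breakpoints: "0 \<in> S" "Suc n \<in> S" "S \<subseteq> {0..Suc n}" "finite S"
  using invariant finite_subset unfolding invariant_def breakpoints_invariant_def by auto

lemma level_invariant: "level_invariant st L" and profile_invariant: "profile_invariant st"
  and budget: "B = K - (\<Sum>i=1..n. z i * X i)"
  using invariant unfolding invariant_def budget_invariant_def by blast+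

lemmas level = level_invariantD[OF level_invariant]
lemmas profile = profile_invariantD[OF profile_invariant]

lemma B_pos: "0 < B"
  using running unfolding alg_running_def by simp

lemma ist_free: "ist \<in> {1..n} - S" and ist_min: "j \<in> {1..n} - S \<Longrightarrow> Y ist \<le> Y j"
proof -
  have "{0..Suc n} = insert 0 (insert (Suc n) {1..n})" by auto
  then have "{1..n} - S \<noteq> {}"
    using running breakpoints unfolding alg_running_def by auto
  then show "ist \<in> {1..n} - S" "j \<in> {1..n} - S \<Longrightarrow> Y ist \<le> Y j"
    unfolding ist_def using alg_istar_min by auto
qed

lemma iR_eq: "iR = next_in S ist"
  by (simp add: next_in_def iR_def)

lemma iR_props: "iR \<in> S" "ist < iR" "iR \<le> Suc n" "k \<in> S \<Longrightarrow> ist < k \<Longrightarrow> iR \<le> k"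
proof -
  have "ist < Suc n" using ist_free by auto
  then show "iR \<in> S" "ist < iR" "iR \<le> Suc n"
    unfolding iR_eq using next_in_mem_gt_le breakpoints by auto
  show "k \<in> S \<Longrightarrow> ist < k \<Longrightarrow> iR \<le> k"
    unfolding iR_def using breakpoints by (intro Min_le) auto
qed

lemma iL_props: "iL \<in> S" "iL < ist" "k \<in> S \<Longrightarrow> k < ist \<Longrightarrow> k \<le> iL"
proof -
  have fin: "finite {j \<in> S. j < ist}" and "0 \<in> {j \<in> S. j < ist}"
    using breakpoints ist_free by auto
  then have "iL \<in> {j \<in> S. j < ist}" unfolding iL_def by (intro Max_in) auto
  then show "iL \<in> S" "iL < ist" by auto
  show "k \<in> S \<Longrightarrow> k < ist \<Longrightarrow> k \<le> iL"
    unfolding iL_def using fin by (intro Max_ge) auto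
qed

lemma Y_ist: "Y ist = avgz z ist iR" "L \<le> Y ist" "0 < Y ist"
proof -
  show "Y ist = avgz z ist iR" "L \<le> Y ist" using level(1,2) ist_free iR_eq by auto
  then show "0 < Y ist" using avgz_pos_in_range iR_props ist_free by auto
qed

lemma next_in_step:
  assumes "a \<le> n"
  shows "next_in (insert ist S) a = (if iL \<le> a \<and> a < ist then ist else next_in S a)"
proof -
  have fin: "finite (insert ist S)" using breakpoints by simp
  have "a < Suc n" using assms by simp
  note next_a = next_in_mem_gt_le[OF breakpoints(4,2) this]
  show ?thesis
  proof (cases "iL \<le> a \<and> a < ist")
    case True
    have "ist \<le> k" if "k \<in> S" "a < k" for k
      using True that iL_props(3)[of k] by fastforce
    then show ?thesis using True fin by (auto intro!: next_in_eqI)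
  next
    case False
    have "next_in S a \<le> ist" if "a < ist"
      using False that iL_props next_in_mem_gt_le[OF breakpoints(4), of iL a] by auto
    then show ?thesis
      using False fin next_a next_in_mem_gt_le[OF breakpoints(4)] by (auto intro!: next_in_eqI)
  qed
qed

lemma block_weight: "real (iR - ist) * Y ist = sumz z ist iR" "0 < sumz z ist iR"
  using sumz_eq_avgz[of ist iR z] Y_ist iR_props by auto

lemma d_bounds:
  "0 \<le> d" "d * sumz z ist iR \<le> B" "X ist + d \<le> q ist"
  "X ist + d = q ist \<or> d * sumz z ist iR = B"
proof -
  have d_eq: "d = min (B / sumz z ist iR) (q ist - X ist)" unfolding d_def block_weight(1) ..
  have "X ist \<le> q ist" using profile(4) ist_free by auto
  then show "0 \<le> d" "d * sumz z ist iR \<le> B" "X ist + d \<le> q ist"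
    "X ist + d = q ist \<or> d * sumz z ist iR = B"
    unfolding d_eq using min_step_bounds[OF B_pos block_weight(2)] by auto
qed

lemma X_block: "ist \<le> i \<Longrightarrow> i < iR \<Longrightarrow> X i = X ist"
proof (induction i rule: dec_induct)
  case (step m)
  then have "Suc m \<in> {1..n} - S" using iR_props ist_free by fastforce
  then show ?case using step profile(2) by simp
qed simp

lemma next_in_between:
  assumes "iL \<le> a" "a < ist"
  shows "next_in S a = iR"
proof (rule next_in_eqI[OF breakpoints(4) iR_props(1)])
  show "a < iR" using assms iR_props(2) by simp
  fix k assume k: "k \<in> S" "a < k"
  have "\<not> k < ist" using assms k iL_props(3)[of k] by auto
  moreover have "k \<noteq> ist" using k(1) ist_free by auto
  ultimately have "ist < k" by simp
  then show "iR \<le> k" using iR_props(4) k(1) by simp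
qed

lemma step_budget_eq: "stB (alg_step n q z st) = B - d * sumz z ist iR"
  unfolding alg_step_simps mult.assoc block_weight(1) ..

lemma step_free:
  assumes "a \<in> {1..n} - insert ist S"
  shows "stY (alg_step n q z st) a = avgz z a (next_in (insert ist S) a) \<and>
         Y ist \<le> stY (alg_step n q z st) a"
proof -
  have a: "a \<in> {1..n} - S" "a \<noteq> ist" using assms by auto
  have Ya: "Y a = avgz z a (next_in S a)" "Y ist \<le> Y a" using level(1) ist_min a by auto
  show ?thesis
  proof (cases "iL < a \<and> a < ist")
    case True
    then have "next_in S a = iR" by (intro next_in_between) auto
    then have "avgz z a iR \<le> avgz z a ist"
      using avgz_prefix_ge[of a ist iR z] True iR_props Ya Y_ist(1) by simp
    then show ?thesis
      using True Ya next_in_step[of a] a \<open>next_in S a = iR\<close> by (simp add: alg_step_simps)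
  next
    case False
    have "a \<noteq> iL" using a iL_props(1) by auto
    then show ?thesis using False Ya next_in_step[of a] a by (auto simp: alg_step_simps)
  qed
qed

lemma step_chosen:
  assumes "s \<in> {1..n} \<inter> insert ist S"
  shows "avgz z s (next_in (insert ist S) s) \<le> Y ist \<and> (stX (alg_step n q z st) s = q s \<or>
           stB (alg_step n q z st) = 0 \<and> avgz z s (next_in (insert ist S) s) = Y ist)"
proof (cases "s = ist")
  case True
  have "next_in (insert ist S) s = iR" using next_in_step[of ist] True ist_free iR_eq by simp
  then show ?thesis
    using True d_bounds(4) iR_props(2) Y_ist(1) by (auto simp: alg_step_simps(3) step_budget_eq)
next
  case False
  then have s: "s \<in> {1..n} \<inter> S" using assms by auto
  have "\<not> (ist \<le> s \<and> s < iR)" using s False iR_props(4)[of s] by auto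
  moreover have "X s = q s" using level(4)[OF s] B_pos by auto
  moreover have "avgz z s (next_in (insert ist S) s) \<le> Y ist"
  proof (cases "iL \<le> s \<and> s < ist")
    case True
    have "avgz z s iR \<le> avgz z ist iR"
      using level(3)[OF s] next_in_between[of s] True Y_ist by simp
    then have "avgz z s ist \<le> avgz z s iR" using avgz_prefix_le True iR_props(2) by blast
    then show ?thesis
      using True s next_in_step[of s] next_in_between[of s] level(3)[OF s] Y_ist(2) by simp
  next
    case False
    then have "next_in (insert ist S) s = next_in S s" using next_in_step[of s] s by auto
    then show ?thesis using level(3)[OF s] Y_ist(2) by simp
  qed
  ultimately show ?thesis by (auto simp: alg_step_simps(3))
qed

lemma step_level_invariant: "level_invariant (alg_step n q z st) (Y ist)"
  unfolding level_invariant_def alg_step_simps(1)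
  using step_free step_chosen Y_ist(3) less_imp_le by blast

lemma step_X_free:
  assumes "a \<in> {1..n} - insert ist S"
  shows "stX (alg_step n q z st) a = stX (alg_step n q z st) (a - 1)"
proof -
  have "a \<noteq> ist" "a \<noteq> iR" "1 \<le> a" using assms iR_props(1) by auto
  then have "(ist \<le> a \<and> a < iR) = (ist \<le> a - 1 \<and> a - 1 < iR)" by auto
  moreover have "X a = X (a - 1)" using profile(2) assms by auto
  ultimately show ?thesis by (simp add: alg_step_simps(3))
qed

lemma step_X_bounds:
  assumes "i \<in> {1..n}"
  shows "0 \<le> stX (alg_step n q z st) i \<and> stX (alg_step n q z st) i \<le> q i"
proof (cases "ist \<le> i \<and> i < iR")
  case True
  have "q ist \<le> q i" using q_mono ist_free assms True by auto
  moreover have "0 \<le> X ist" using profile(3) ist_free by auto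
  ultimately show ?thesis using True X_block[of i] d_bounds(1,3) by (simp add: alg_step_simps(3))
next
  case False
  then show ?thesis using profile(3,4) assms by (auto simp: alg_step_simps(3))
qed

lemma step_X_mono:
  assumes "1 \<le> i" "i < n"
  shows "stX (alg_step n q z st) i \<le> stX (alg_step n q z st) (Suc i)"
proof -
  have mono: "X i \<le> X (Suc i)" using profile(5) assms by simp
  consider "ist \<le> i \<and> Suc i < iR" | "ist \<le> i \<and> Suc i = iR" | "Suc i = ist"
    | "\<not> (ist \<le> i \<and> i < iR) \<and> Suc i \<noteq> ist"
    by linarith
  then show ?thesis
  proof cases
    case 1
    then show ?thesis using mono by (simp add: alg_step_simps(3))
  next
    case 2
    then have "iR \<in> {1..n} \<inter> S" using assms iR_props(1) by auto
    then have "X iR = q iR" "q ist \<le> q iR" using level(4) B_pos q_mono ist_free 2 by auto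
    then show ?thesis using 2 X_block[of i] d_bounds(3) iR_props(2) by (simp add: alg_step_simps(3))
  next
    case 3
    then show ?thesis using mono iR_props(2) d_bounds(1) by (simp add: alg_step_simps(3))
  next
    case 4
    then show ?thesis using mono by (auto simp: alg_step_simps(3))
  qed
qed

lemma step_profile_invariant: "profile_invariant (alg_step n q z st)"
  unfolding profile_invariant_def
  using step_X_free step_X_bounds step_X_mono profile(1) ist_free
  by (auto simp: alg_step_simps(1,3))

lemma step_budget_invariant: "budget_invariant (alg_step n q z st)"
proof -
  have "(\<Sum>i=1..n. z i * stX (alg_step n q z st) i)
      = (\<Sum>i=1..n. z i * X i + (if i \<in> {ist..<iR} then d * z i else 0))"
    by (rule sum.cong) (auto simp: alg_step_simps(3) algebra_simps)
  also have "\<dots> = (\<Sum>i=1..n. z i * X i) + (\<Sum>i\<in>{1..n} \<inter> {ist..<iR}. d * z i)"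
    by (simp add: sum.distrib sum.inter_restrict)
  also have "{1..n} \<inter> {ist..<iR} = {ist..<iR}" using ist_free iR_props(3) by auto
  also have "(\<Sum>i\<in>{ist..<iR}. d * z i) = d * sumz z ist iR"
    by (simp add: sumz_def sum_distrib_left)
  finally show ?thesis
    unfolding budget_invariant_def step_budget_eq using budget d_bounds(2) by simp
qed

lemma step_invariant: "invariant (alg_step n q z st) (Y ist)"
  unfolding invariant_def breakpoints_invariant_def
  using step_level_invariant step_profile_invariant step_budget_invariant breakpoints ist_free
  by (auto simp: alg_step_simps(1))

end

context problem_P
begin

lemma invariant_iter:
  assumes "\<forall>j<m. alg_running n (alg_iter n q z K j)"
  shows "(\<exists>L. invariant (alg_iter n q z K m) L) \<and> card (stS (alg_iter n q z K m)) = m + 2"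
  using assms
proof (induction m)
  case 0
  then show ?case using invariant_init by (auto simp: alg_iter_def alg_init_def)
next
  case (Suc m)
  then obtain L where inv: "invariant (alg_iter n q z K m) L"
    and card: "card (stS (alg_iter n q z K m)) = m + 2" by auto
  interpret running_state n q z K "alg_iter n q z K m" L
    using inv Suc.prems by unfold_locales auto
  show ?case
    using step_invariant ist_free breakpoints(4) card by (auto simp: alg_iter_Suc alg_step_simps(1))
qed

lemma alg_terminates: "\<exists>m. \<not> alg_running n (alg_iter n q z K m)"
proof (rule ccontr)
  assume "\<not> ?thesis"
  then obtain L where "invariant (alg_iter n q z K (n + 2)) L"
    and card: "card (stS (alg_iter n q z K (n + 2))) = n + 4"
    using invariant_iter[of "n + 2"] by auto
  then have "card (stS (alg_iter n q z K (n + 2))) \<le> card {0..Suc n}"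
    unfolding invariant_def breakpoints_invariant_def by (intro card_mono) auto
  then show False using card by simp
qed

lemma alg_output_optimal: "optimalP n q z K (alg_output n q z K)"
proof -
  have stop: "\<not> alg_running n (alg_iter n q z K (alg_num_iter n q z K))"
    unfolding alg_num_iter_def using alg_terminates by (rule LeastI_ex)
  have "\<forall>j < alg_num_iter n q z K. alg_running n (alg_iter n q z K j)"
    unfolding alg_num_iter_def using not_less_Least by blast
  then obtain L where "invariant (alg_iter n q z K (alg_num_iter n q z K)) L"
    using invariant_iter by blast
  then show ?thesis unfolding alg_output_def using stop by (rule optimal_if_stopped)
qed

end

theorem lemma5:
  fixes n :: nat and q z :: "nat \<Rightarrow> real" and K :: real
  assumes "n \<ge> 1"
    and "0 < q 1"
    and "\<forall>i\<in>{1..n}. \<forall>j\<in>{1..n}. i \<le> j \<longrightarrow> q i \<le> q j"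
    and "\<forall>i\<in>{1..n}. z i > 0"
    and "K > 0"
  shows "\<exists>xs. optimalP n q z K xs \<and>
           (\<forall>j\<in>{1..alg_num_iter n q z K}.
              xs (alg_chosen n q z K j) = alg_output n q z K (alg_chosen n q z K j))"
proof -
  interpret problem_P n q z K
  proof
    fix i assume "i \<in> {1..n}"
    then have "q 1 \<le> q i" using assms(1,3) by auto
    then show "0 \<le> q i" using assms(2) by linarith
  qed (use assms in auto)
  show ?thesis using alg_output_optimal by blast
qed

end
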